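(* Let $G$ be a graph on $n$ vertices with at least two vertex-disjoint edges. Then $\Gamma(G)+1 \le d_0(G) \le \min\{n-1, \Gamma(G)+\gamma(G)\}$.
   Context: All graphs are finite and simple. A set $S \subseteq V(G)$ is a dominating set of $G$ if every vertex of $V(G)\setminus S$ is adjacent to a vertex of $S$; it is a minimal dominating set if no proper subset of it is a dominating set. $\gamma(G)$ is the minimum cardinality of a dominating set of $G$, and $\Gamma(G)$ is the maximum cardinality of a minimal dominating set of $G$. For an integer $k \ge \gamma(G)$, the $k$-dominating graph $D_k(G)$ is the graph whose vertices are the dominating sets of $G$ of cardinality at most $k$, with two such sets $A,B$ adjacent if and only if their symmetric difference $(A\setminus B)\cup(B\setminus A)$ consists of exactly one vertex of $G$. $d_0(G)$ denotes the smallest integer $d \ge \gamma(G)$ such that $D_k(G)$ is connected for every integer $k \ge d$. *)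

theory Defs
  imports Main
begin

definition simple_graph :: "'a set \<Rightarrow> 'a set set \<Rightarrow> bool" where
  "simple_graph V E \<longleftrightarrow> finite V \<and>
     (\<forall>e\<in>E. \<exists>u v. e = {u, v} \<and> u \<noteq> v \<and> u \<in> V \<and> v \<in> V)"

definition dominating :: "'a set \<Rightarrow> 'a set set \<Rightarrow> 'a set \<Rightarrow> bool" where
  "dominating V E S \<longleftrightarrow> S \<subseteq> V \<and> (\<forall>v \<in> V - S. \<exists>u \<in> S. {u, v} \<in> E)"

definition minimal_dominating :: "'a set \<Rightarrow> 'a set set \<Rightarrow> 'a set \<Rightarrow> bool" where
  "minimal_dominating V E S \<longleftrightarrow> dominating V E S \<and> (\<forall>T. T \<subset> S \<longrightarrow> \<not> dominating V E T)"

definition domination_number :: "'a set \<Rightarrow> 'a set set \<Rightarrow> nat" where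
  "domination_number V E = Min (card ` {S. dominating V E S})"

definition upper_domination_number :: "'a set \<Rightarrow> 'a set set \<Rightarrow> nat" where
  "upper_domination_number V E = Max (card ` {S. minimal_dominating V E S})"

definition dom_graph_vertices :: "'a set \<Rightarrow> 'a set set \<Rightarrow> nat \<Rightarrow> 'a set set" where
  "dom_graph_vertices V E k = {S. dominating V E S \<and> card S \<le> k}"

definition dom_graph_edges :: "'a set \<Rightarrow> 'a set set \<Rightarrow> nat \<Rightarrow> ('a set \<times> 'a set) set" where
  "dom_graph_edges V E k = {(A, B). A \<in> dom_graph_vertices V E k \<and> B \<in> dom_graph_vertices V E k
      \<and> card ((A - B) \<union> (B - A)) = 1}"

definition dom_graph_connected :: "'a set \<Rightarrow> 'a set set \<Rightarrow> nat \<Rightarrow> bool" where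
  "dom_graph_connected V E k \<longleftrightarrow> dom_graph_vertices V E k \<noteq> {} \<and>
     (\<forall>A \<in> dom_graph_vertices V E k. \<forall>B \<in> dom_graph_vertices V E k.
        (A, B) \<in> (dom_graph_edges V E k)\<^sup>*)"

definition d0 :: "'a set \<Rightarrow> 'a set set \<Rightarrow> nat" where
  "d0 V E = (LEAST d. domination_number V E \<le> d \<and> (\<forall>k \<ge> d. dom_graph_connected V E k))"

end

theory Submission
  imports Defs
begin

(* The proof works inside the reconfiguration graph D_k(G), whose edges add or delete
   one vertex of a dominating set.  Three facts carry the argument:
   (1) a dominating set A is joined in D_k(G) to every superset B of size at most k,
       by adding the vertices of B - A one at a time;
   (2) for k >= Gamma + gamma every dominating set A reaches a fixed minimum dominating
       set D: shrink A to a minimal dominating set A', then pass through A' \<union> D;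
   (3) for k >= n - 1 with two disjoint edges ab, cd, every dominating set reaches V - {a}:
       it lies below some V - {x} with x non-isolated, and two sets V - {x}, V - {y} are
       joined through V - {x, y} whenever the latter dominates.
   Conversely, a minimal dominating set of maximum size Gamma is an isolated vertex of
   D_Gamma(G), while another minimal dominating set (avoiding a non-isolated vertex of it)
   exists, so D_Gamma(G) is disconnected. *)

lemma simple_graph_finite: "simple_graph V E \<Longrightarrow> finite V"
  unfolding simple_graph_def by blast

lemma edge_endpoints:
  assumes "simple_graph V E" "{u, x} \<in> E"
  shows "u \<in> V" "x \<in> V" "u \<noteq> x"
  using assms unfolding simple_graph_def by (auto simp: doubleton_eq_iff)

lemma dominating_subset: "dominating V E S \<Longrightarrow> S \<subseteq> V"
  unfolding dominating_def by blast

lemma dominating_mono: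
  assumes "dominating V E S" "S \<subseteq> T" "T \<subseteq> V"
  shows "dominating V E T"
  using assms unfolding dominating_def by blast

lemma dominating_all: "dominating V E V"
  unfolding dominating_def by blast

lemma dominating_remove_two:
  assumes "simple_graph V E" "{u, x} \<in> E" "u \<noteq> y" "{w, y} \<in> E" "w \<noteq> x"
  shows "dominating V E (V - {x, y})"
  using edge_endpoints[OF assms(1,2)] edge_endpoints[OF assms(1,4)] assms(2-5)
  unfolding dominating_def by blast

lemma dominating_remove_one:
  assumes "simple_graph V E" "{u, x} \<in> E"
  shows "dominating V E (V - {x})"
  using dominating_remove_two[OF assms _ assms(2)] edge_endpoints[OF assms] by simp

lemma exists_minimal_dominating_subset:
  assumes "finite V" "dominating V E A"
  shows "\<exists>A'. A' \<subseteq> A \<and> minimal_dominating V E A'"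
  using assms(2)
proof (induction "card A" arbitrary: A rule: less_induct)
  case less
  show ?case
  proof (cases "minimal_dominating V E A")
    case True
    then show ?thesis by blast
  next
    case False
    then obtain T where T: "T \<subset> A" "dominating V E T"
      using less.prems unfolding minimal_dominating_def by blast
    have "finite A" using finite_subset[OF dominating_subset[OF less.prems] assms(1)] .
    then have "card T < card A" using T(1) psubset_card_mono by blast
    then obtain A' where "A' \<subseteq> T" "minimal_dominating V E A'" using less.hyps T(2) by blast
    then show ?thesis using T(1) by blast
  qed
qed

lemma finite_dominating_sets: "finite V \<Longrightarrow> finite {S. dominating V E S}"
  by (rule finite_subset[of _ "Pow V"]) (auto dest: dominating_subset)

lemma finite_minimal_dominating_sets: "finite V \<Longrightarrow> finite {S. minimal_dominating V E S}"
  by (rule finite_subset[OF _ finite_dominating_sets]) (auto simp: minimal_dominating_def)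

lemma domination_number_le:
  assumes "finite V" "dominating V E S"
  shows "domination_number V E \<le> card S"
  unfolding domination_number_def using assms finite_dominating_sets[OF assms(1)]
  by (intro Min_le) auto

lemma domination_number_attained:
  assumes "finite V"
  obtains D where "dominating V E D" "card D = domination_number V E"
proof -
  have "domination_number V E \<in> card ` {S. dominating V E S}"
    unfolding domination_number_def using finite_dominating_sets[OF assms] dominating_all[of V E]
    by (intro Min_in) auto
  then show ?thesis using that by auto
qed

lemma upper_domination_number_ge:
  assumes "finite V" "minimal_dominating V E S"
  shows "card S \<le> upper_domination_number V E"
  unfolding upper_domination_number_def using assms finite_minimal_dominating_sets[OF assms(1)]
  by (intro Max_ge) auto

lemma upper_domination_number_attained:
  assumes "finite V"
  obtains S where "minimal_dominating V E S" "card S = upper_domination_number V E"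
proof -
  obtain S where "minimal_dominating V E S"
    using exists_minimal_dominating_subset[OF assms dominating_all] by blast
  then have "upper_domination_number V E \<in> card ` {S. minimal_dominating V E S}"
    unfolding upper_domination_number_def using finite_minimal_dominating_sets[OF assms]
    by (intro Max_in) auto
  then show ?thesis using that by auto
qed

abbreviation dom_graph_reach :: "'a set \<Rightarrow> 'a set set \<Rightarrow> nat \<Rightarrow> 'a set \<Rightarrow> 'a set \<Rightarrow> bool" where
  "dom_graph_reach V E k A B \<equiv> (A, B) \<in> (dom_graph_edges V E k)\<^sup>*"

lemma symdiff_card_one_iff:
  "card ((A - B) \<union> (B - A)) = 1 \<longleftrightarrow>
     (\<exists>v. (v \<in> A \<and> B = A - {v}) \<or> (v \<notin> A \<and> B = insert v A))"
proof
  assume "card ((A - B) \<union> (B - A)) = 1"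
  then obtain v where v: "(A - B) \<union> (B - A) = {v}" by (rule card_1_singletonE)
  then have same: "x \<in> B \<longleftrightarrow> x \<in> A" if "x \<noteq> v" for x
    using that by blast
  show "\<exists>v. (v \<in> A \<and> B = A - {v}) \<or> (v \<notin> A \<and> B = insert v A)"
  proof (cases "v \<in> A")
    case True
    then have "v \<notin> B" using v by blast
    then have "x \<in> B \<longleftrightarrow> x \<in> A - {v}" for x using same[of x] by (cases "x = v") auto
    then show ?thesis using True by blast
  next
    case False
    then have "v \<in> B" using v by blast
    then have "x \<in> B \<longleftrightarrow> x \<in> insert v A" for x using same[of x] by (cases "x = v") auto
    then show ?thesis using False by blast
  qed
next
  assume "\<exists>v. (v \<in> A \<and> B = A - {v}) \<or> (v \<notin> A \<and> B = insert v A)"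
  then obtain v where "(A - B) \<union> (B - A) = {v}" by blast
  then show "card ((A - B) \<union> (B - A)) = 1" by simp
qed

lemma dom_graph_edge_sym:
  "(A, B) \<in> dom_graph_edges V E k \<Longrightarrow> (B, A) \<in> dom_graph_edges V E k"
  unfolding dom_graph_edges_def by (simp add: Un_commute)

lemma dom_graph_reach_sym: "dom_graph_reach V E k A B \<Longrightarrow> dom_graph_reach V E k B A"
  by (induction rule: rtrancl_induct) (auto intro: converse_rtrancl_into_rtrancl dom_graph_edge_sym)

lemma dom_graph_edge_insert:
  assumes "dominating V E A" "v \<in> V" "v \<notin> A" "card (insert v A) \<le> k"
  shows "(A, insert v A) \<in> dom_graph_edges V E k"
proof -
  have "dominating V E (insert v A)"
    using dominating_mono[OF assms(1)] dominating_subset[OF assms(1)] assms(2) by blast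
  moreover have "card A \<le> k" using card_insert_le[of A v] assms(4) by linarith
  ultimately show ?thesis
    unfolding dom_graph_edges_def dom_graph_vertices_def symdiff_card_one_iff
    using assms by auto
qed

lemma dom_graph_reach_superset:
  assumes "finite V" "dominating V E A" "A \<subseteq> B" "B \<subseteq> V" "card B \<le> k"
  shows "dom_graph_reach V E k A B"
proof -
  have "dom_graph_reach V E k A (A \<union> C)" if "C \<subseteq> V" "card (A \<union> C) \<le> k" for C
  proof -
    have "finite C" using finite_subset[OF that(1) assms(1)] .
    then show ?thesis using that
    proof (induction C rule: finite_induct)
      case (insert c C)
      have "card (A \<union> C) \<le> k"
        using card_insert_le[of "A \<union> C" c] insert.prems(2) by simp
      then have reach: "dom_graph_reach V E k A (A \<union> C)" using insert by simp
      show ?case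
      proof (cases "c \<in> A \<union> C")
        case False
        have "dominating V E (A \<union> C)"
          using dominating_mono[OF assms(2)] insert.prems(1) dominating_subset[OF assms(2)] by blast
        then have "(A \<union> C, insert c (A \<union> C)) \<in> dom_graph_edges V E k"
          using False insert.prems by (intro dom_graph_edge_insert) auto
        then show ?thesis using reach by (simp add: rtrancl_into_rtrancl)
      qed (use reach in \<open>simp add: insert_absorb\<close>)
    qed simp
  qed
  moreover have "A \<union> (B - A) = B" using assms(3) by blast
  ultimately show ?thesis using assms(4,5) by (metis Diff_subset order_trans)
qed

lemma dom_graph_connected_hub:
  assumes "H \<in> dom_graph_vertices V E k"
    and "\<And>A. A \<in> dom_graph_vertices V E k \<Longrightarrow> dom_graph_reach V E k A H"
  shows "dom_graph_connected V E k"
  unfolding dom_graph_connected_def using assms dom_graph_reach_sym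
  by (blast intro: rtrancl_trans)

section \<open>Connectivity of D_k above Gamma + gamma\<close>

text \<open>Fact (2): for k >= Gamma + gamma every dominating set A of size at most k reaches a
  minimum dominating set D, via a minimal dominating set A' below A and the union A' \<union> D.\<close>
lemma dom_graph_connected_above_Gamma_plus_gamma:
  assumes "finite V" "upper_domination_number V E + domination_number V E \<le> k"
  shows "dom_graph_connected V E k"
proof -
  obtain D where D: "dominating V E D" "card D = domination_number V E"
    using domination_number_attained[OF assms(1)] by blast
  show ?thesis
  proof (rule dom_graph_connected_hub)
    show "D \<in> dom_graph_vertices V E k"
      unfolding dom_graph_vertices_def using D assms(2) by simp
  next
    fix A assume "A \<in> dom_graph_vertices V E k"
    then have A: "dominating V E A" "card A \<le> k" unfolding dom_graph_vertices_def by auto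
    obtain A' where A': "A' \<subseteq> A" "minimal_dominating V E A'"
      using exists_minimal_dominating_subset[OF assms(1) A(1)] by blast
    have A'_dom: "dominating V E A'" using A'(2) unfolding minimal_dominating_def by blast
    have "card A' \<le> upper_domination_number V E"
      using upper_domination_number_ge[OF assms(1) A'(2)] .
    then have union_small: "card (A' \<union> D) \<le> k"
      using card_Un_le[of A' D] D(2) assms(2) by linarith
    have union_sub: "A' \<union> D \<subseteq> V"
      using A'(1) dominating_subset[OF A(1)] dominating_subset[OF D(1)] by blast
    have "dom_graph_reach V E k A A'"
      using dom_graph_reach_superset[OF assms(1) A'_dom A'(1) dominating_subset[OF A(1)] A(2)]
      by (rule dom_graph_reach_sym)
    also have "dom_graph_reach V E k A' (A' \<union> D)"
      using dom_graph_reach_superset[OF assms(1) A'_dom _ union_sub union_small] by blast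
    also have "dom_graph_reach V E k (A' \<union> D) D"
      using dom_graph_reach_superset[OF assms(1) D(1) _ union_sub union_small] 
      by (blast intro: dom_graph_reach_sym)
    finally show "dom_graph_reach V E k A D" .
  qed
qed

section \<open>Connectivity of D_k above n - 1\<close>

lemma dom_graph_reach_co_singletons:
  assumes "finite V" "x \<in> V" "y \<in> V" "dominating V E (V - {x, y})" "card V - 1 \<le> k"
  shows "dom_graph_reach V E k (V - {x}) (V - {y})"
proof -
  have small: "card (V - {z}) \<le> k" if "z \<in> V" for z
    using that assms(1,5) by simp
  have "dom_graph_reach V E k (V - {x, y}) (V - {x})"
    using dom_graph_reach_superset[OF assms(1,4) _ _ small[OF assms(2)]] by blast
  then have "dom_graph_reach V E k (V - {x}) (V - {x, y})"
    by (rule dom_graph_reach_sym)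
  also have "dom_graph_reach V E k (V - {x, y}) (V - {y})"
    using dom_graph_reach_superset[OF assms(1,4) _ _ small[OF assms(3)]] by blast
  finally show ?thesis .
qed

text \<open>Fact (3): with two disjoint edges ab and cd, D_k is connected for k >= n - 1, the
  set V - {a} serving as a hub.\<close>
lemma dom_graph_connected_above_n_minus_1:
  assumes G: "simple_graph V E" and ab: "{a, b} \<in> E" and cd: "{c, d} \<in> E"
    and disj: "{a, b} \<inter> {c, d} = {}" and k: "card V - 1 \<le> k"
  shows "dom_graph_connected V E k"
proof -
  have fin: "finite V" using G by (rule simple_graph_finite)
  have ba: "{b, a} \<in> E" and dc: "{d, c} \<in> E" using ab cd by (simp_all add: insert_commute)
  have distinct: "a \<noteq> c" "a \<noteq> d" "b \<noteq> c" "b \<noteq> d" using disj by auto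
  have swap: "dom_graph_reach V E k (V - {x}) (V - {y})"
    if "{u, x} \<in> E" "u \<noteq> y" "{w, y} \<in> E" "w \<noteq> x" for x y u w
    using dom_graph_reach_co_singletons[OF fin _ _ dominating_remove_two[OF G that] k]
      edge_endpoints[OF G that(1)] edge_endpoints[OF G that(3)] by blast
  have c_to_a: "dom_graph_reach V E k (V - {c}) (V - {a})"
    using swap[OF dc _ ba] distinct by blast
  have to_hub: "dom_graph_reach V E k (V - {x}) (V - {a})" if wx: "{w, x} \<in> E" for w x
  proof (cases "w \<noteq> a \<and> x \<noteq> b")
    case True
    then show ?thesis using swap[OF wx _ ba] by blast
  next
    case False
    show ?thesis
    proof (cases "x = d")
      case True
      then show ?thesis using swap[OF cd _ ba] distinct by blast
    next
      case x_not_d: False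
      have "{a, x} \<in> E" using False wx ab by auto
      then have "dom_graph_reach V E k (V - {x}) (V - {c})"
        using swap[OF _ _ dc] x_not_d distinct by blast
      then show ?thesis using c_to_a by (rule rtrancl_trans)
    qed
  qed
  show ?thesis
  proof (rule dom_graph_connected_hub)
    show "V - {a} \<in> dom_graph_vertices V E k"
      unfolding dom_graph_vertices_def
      using dominating_remove_one[OF G ba] edge_endpoints[OF G ab] fin k by simp
  next
    fix A assume "A \<in> dom_graph_vertices V E k"
    then have A: "dominating V E A" "card A \<le> k" unfolding dom_graph_vertices_def by auto
    show "dom_graph_reach V E k A (V - {a})"
    proof (cases "A = V")
      case True
      have "dom_graph_reach V E k (V - {a}) A"
        using dom_graph_reach_superset[OF fin dominating_remove_one[OF G ba] _ _ A(2)] True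
        by blast
      then show ?thesis by (rule dom_graph_reach_sym)
    next
      case False
      then obtain x where x: "x \<in> V" "x \<notin> A" using dominating_subset[OF A(1)] by blast
      then obtain u where u: "u \<in> A" "{u, x} \<in> E" using A(1) unfolding dominating_def by blast
      have "dom_graph_reach V E k A (V - {x})"
        using dom_graph_reach_superset[OF fin A(1) _ _, of "V - {x}"] x fin k
          dominating_subset[OF A(1)] by auto
      then show ?thesis using to_hub[OF u(2)] by (rule rtrancl_trans)
    qed
  qed
qed

section \<open>Disconnectedness of D_Gamma\<close>

text \<open>A minimal dominating set S of size k is an isolated vertex of D_k: deleting a vertex
  destroys domination by minimality, and adding one exceeds the size bound.\<close>
lemma minimal_dominating_isolated:
  assumes "finite V" "minimal_dominating V E S" "card S = k"
  shows "(S, X) \<notin> dom_graph_edges V E k"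
proof
  assume "(S, X) \<in> dom_graph_edges V E k"
  then have X: "dominating V E X" "card X \<le> k"
    and step: "\<exists>v. (v \<in> S \<and> X = S - {v}) \<or> (v \<notin> S \<and> X = insert v S)"
    unfolding dom_graph_edges_def dom_graph_vertices_def symdiff_card_one_iff by auto
  have "finite S"
    using assms(2) dominating_subset assms(1) finite_subset unfolding minimal_dominating_def by metis
  then have "X \<subset> S \<or> card X = Suc (card S)" using step by auto
  then show False using X assms(2,3) unfolding minimal_dominating_def by auto
qed

text \<open>In a graph with an edge, D_Gamma is disconnected: a maximum minimal dominating set S
  is isolated, and a minimal dominating set inside V - {s}, for a non-isolated s \<in> S,
  is a second vertex of D_Gamma.\<close>
lemma not_dom_graph_connected_at_Gamma:
  assumes G: "simple_graph V E" and ab: "{a, b} \<in> E"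
  shows "\<not> dom_graph_connected V E (upper_domination_number V E)"
proof
  let ?k = "upper_domination_number V E"
  assume conn: "dom_graph_connected V E ?k"
  have fin: "finite V" using G by (rule simple_graph_finite)
  obtain S where S: "minimal_dominating V E S" "card S = ?k"
    using upper_domination_number_attained[OF fin] by blast
  have S_dom: "dominating V E S" using S(1) unfolding minimal_dominating_def by blast
  have S_vertex: "S \<in> dom_graph_vertices V E ?k"
    unfolding dom_graph_vertices_def using S_dom S(2) by simp
  have S_only: "X = S" if "dom_graph_reach V E ?k S X" for X
    using that by (induction rule: rtrancl_induct) (use minimal_dominating_isolated[OF fin S] in auto)
  obtain s t where st: "s \<in> S" "{t, s} \<in> E"
  proof (cases "a \<in> S")
    case True
    then show ?thesis using that ab by (simp add: insert_commute)
  next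
    case False
    then obtain u where "u \<in> S" "{u, a} \<in> E"
      using S_dom edge_endpoints[OF G ab] unfolding dominating_def by blast
    then show ?thesis using that[of u a] by (metis insert_commute)
  qed
  obtain T where T: "T \<subseteq> V - {s}" "minimal_dominating V E T"
    using exists_minimal_dominating_subset[OF fin dominating_remove_one[OF G st(2)]] by blast
  have "T \<in> dom_graph_vertices V E ?k"
    unfolding dom_graph_vertices_def using T(2) upper_domination_number_ge[OF fin T(2)]
    unfolding minimal_dominating_def by simp
  moreover have "T \<noteq> S" using T(1) st(1) by blast
  ultimately show False using conn S_vertex S_only unfolding dom_graph_connected_def by blast
qed

lemma d0_le:
  assumes "domination_number V E \<le> m" "\<And>k. m \<le> k \<Longrightarrow> dom_graph_connected V E k"
  shows "d0 V E \<le> m"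
  unfolding d0_def by (rule Least_le) (use assms in blast)

lemma d0_gt:
  assumes "domination_number V E \<le> m" "\<And>k. m \<le> k \<Longrightarrow> dom_graph_connected V E k"
    and "\<not> dom_graph_connected V E k"
  shows "k < d0 V E"
proof -
  have "\<forall>k \<ge> d0 V E. dom_graph_connected V E k"
    unfolding d0_def by (rule LeastI2[of _ m]) (use assms(1,2) in auto)
  then show ?thesis using assms(3) by (meson not_le)
qed

theorem corollary6:
  fixes V :: "'a set" and E :: "'a set set"
  assumes "simple_graph V E"
    and "\<exists>e1 \<in> E. \<exists>e2 \<in> E. e1 \<inter> e2 = {}"
  shows "upper_domination_number V E + 1 \<le> d0 V E \<and>
         d0 V E \<le> min (card V - 1) (upper_domination_number V E + domination_number V E)"
proof -
  let ?m = "min (card V - 1) (upper_domination_number V E + domination_number V E)"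
  have fin: "finite V" using assms(1) by (rule simple_graph_finite)
  obtain a b c d where ab: "{a, b} \<in> E" and cd: "{c, d} \<in> E" and disj: "{a, b} \<inter> {c, d} = {}"
    using assms unfolding simple_graph_def by metis
  have "domination_number V E \<le> card (V - {a})"
    using domination_number_le[OF fin dominating_remove_one[OF assms(1)]] ab
    by (simp add: insert_commute)
  then have gamma_le_m: "domination_number V E \<le> ?m"
    using edge_endpoints[OF assms(1) ab] fin by simp
  have connected_above_m: "dom_graph_connected V E k" if "?m \<le> k" for k
    using that dom_graph_connected_above_n_minus_1[OF assms(1) ab cd disj]
      dom_graph_connected_above_Gamma_plus_gamma[OF fin] by (cases "card V - 1 \<le> k") auto
  have "upper_domination_number V E < d0 V E"
    using d0_gt[OF gamma_le_m connected_above_m not_dom_graph_connected_at_Gamma[OF assms(1) ab]] .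
  moreover have "d0 V E \<le> ?m" using d0_le[OF gamma_le_m connected_above_m] .
  ultimately show ?thesis by simp
qed

end
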